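(* Put $A=y+x\in\mathcal H''$, so that $A^*=x-y$. (a) Every $h\in\mathcal H''$ can be written uniquely as $$h=\sum c_{a\delta b}\,(A^* )^a s^\delta A^b,\qquad a,b\in\mathbb Z_{\ge0},\ \delta\in\{0,1\},$$ with finitely many nonzero coefficients $c_{a\delta b}\in\mathbb C$. (b) Define the coinvariant $\llbracket h\rrbracket=c_{000}+c_{010}$, and for $f,g\in\mathbb C[x]\subset\mathcal H''$ put $\{f,g\}=\llbracket f^*g\rrbracket$. Then for all $a,b\in\mathbb Z_{\ge0}$: $$\{x^a,x^b\}=0\quad\text{if } a+b \text{ is odd},$$ $$\{x^a,x^b\}=2^{-p}\prod_{i=0}^{p-1}\big(\tfrac12+k+i\big)\quad\text{if } a+b=2p.$$
   Context: The rational DAHA $\mathcal H''$ of type $A_1$ (with parameter $k\in\mathbb C$) is the $\mathbb C$-algebra generated by $x,y,s$ subject to $$[y,x]=\tfrac12+ks,\qquad s^2=1,\qquad sxs=-x,\qquad sys=-y.$$ $*$ denotes the anti-involution of $\mathcal H''$ with $x^*=x$, $y^*=-y$, $s^*=s$. The subalgebra generated by $x$ is identified with $\mathbb C[x]$. *)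

theory Defs
  imports Complex_Main "HOL-Library.Poly_Mapping"
begin

text \<open>The rational DAHA H'' of type A1 is realised as the free associative
complex algebra on generators x, y, s (finitely supported complex functions on
words, with concatenation-convolution product) modulo the two-sided ideal
generated by the defining relations.  Equality in H'' is congruence modulo
that ideal.\<close>

datatype gen = GX | GY | GS

type_synonym fa = "gen list \<Rightarrow>\<^sub>0 complex"

definition fmul :: "fa \<Rightarrow> fa \<Rightarrow> fa" where
  "fmul p q = (\<Sum>u\<in>Poly_Mapping.keys p. \<Sum>v\<in>Poly_Mapping.keys q.
      Poly_Mapping.single (u @ v) (Poly_Mapping.lookup p u * Poly_Mapping.lookup q v))"

definition fscal :: "complex \<Rightarrow> fa" where
  "fscal c = Poly_Mapping.single [] c"

definition fone :: fa where "fone = fscal 1"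

definition gx :: fa where "gx = Poly_Mapping.single [GX] 1"
definition gy :: fa where "gy = Poly_Mapping.single [GY] 1"
definition gs :: fa where "gs = Poly_Mapping.single [GS] 1"

definition fpow :: "fa \<Rightarrow> nat \<Rightarrow> fa" where
  "fpow p n = (fmul p ^^ n) fone"

definition relators :: "complex \<Rightarrow> fa set" where
  "relators k = { fmul gy gx - fmul gx gy - fscal (1/2) - fmul (fscal k) gs,
                  fmul gs gs - fone,
                  fmul (fmul gs gx) gs + gx,
                  fmul (fmul gs gy) gs + gy }"

inductive_set dahaIdeal :: "complex \<Rightarrow> fa set" for k :: complex where
  rel: "r \<in> relators k \<Longrightarrow> r \<in> dahaIdeal k"
| zero: "0 \<in> dahaIdeal k"
| add: "a \<in> dahaIdeal k \<Longrightarrow> b \<in> dahaIdeal k \<Longrightarrow> a + b \<in> dahaIdeal k"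
| lmul: "a \<in> dahaIdeal k \<Longrightarrow> fmul u a \<in> dahaIdeal k"
| rmul: "a \<in> dahaIdeal k \<Longrightarrow> fmul a u \<in> dahaIdeal k"

definition fstar :: "fa \<Rightarrow> fa" where
  "fstar p = (\<Sum>u\<in>Poly_Mapping.keys p.
      Poly_Mapping.single (rev u) ((-1) ^ count_list u GY * Poly_Mapping.lookup p u))"

definition Aop :: fa where "Aop = gy + gx"
definition Astar :: fa where "Astar = gx - gy"

definition basis_elem :: "nat \<times> bool \<times> nat \<Rightarrow> fa" where
  "basis_elem t = (case t of (a, d, b) \<Rightarrow>
      fmul (fmul (fpow Astar a) (if d then gs else fone)) (fpow Aop b))"

definition basis_sum :: "(nat \<times> bool \<times> nat \<Rightarrow>\<^sub>0 complex) \<Rightarrow> fa" where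
  "basis_sum c = (\<Sum>t\<in>Poly_Mapping.keys c. fmul (fscal (Poly_Mapping.lookup c t)) (basis_elem t))"

definition dahaRep :: "complex \<Rightarrow> fa \<Rightarrow> (nat \<times> bool \<times> nat \<Rightarrow>\<^sub>0 complex) \<Rightarrow> bool" where
  "dahaRep k h c \<longleftrightarrow> h - basis_sum c \<in> dahaIdeal k"

definition coinv :: "complex \<Rightarrow> fa \<Rightarrow> complex" where
  "coinv k h = (let c = (THE c. dahaRep k h c) in
      Poly_Mapping.lookup c (0, False, 0) + Poly_Mapping.lookup c (0, True, 0))"

definition bracket :: "complex \<Rightarrow> fa \<Rightarrow> fa \<Rightarrow> complex" where
  "bracket k f g = coinv k (fmul (fstar f) g)"

definition xpow :: "nat \<Rightarrow> fa" where "xpow a = fpow gx a"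

end

theory Submission
  imports Defs
begin

text \<open>Every element of H'' acts on families f(a,\<delta>,b) of coefficients by the formulas that
  describe left multiplication on the monomials (A*)^a s^\<delta> A^b. These operators satisfy the
  defining relations, so the action factors through H''; applied to the family of the unit
  monomial, h returns the coefficients of any expansion of h, which gives uniqueness. Existence
  holds because, by s A* = -A* s, A s = -s A and A A* = A* A + 1 + 2k s, the span of the
  monomials is closed under left multiplication by A*, s and A, hence by x and y.

  Since x* = x, the bracket {x^a, x^b} is the coinvariant [[x^(a+b)]]. The coinvariant kills
  A* h and h A and is unchanged by s h; writing x = (A + A*)/2 and moving A* to the left through
  powers of x with [x, A*] = 1/2 + k s gives [[x^(m+2)]] = (m + 1 + 2k [m even])/4 [[x^m]].\<close>

section \<open>The free algebra as a monoid ring\<close>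

instantiation list :: (type) monoid_add
begin
definition zero_list_def: "0 = []"
definition plus_list_def: "u + v = u @ v"
instance by standard (auto simp: zero_list_def plus_list_def)
end

lemma poly_mapping_sum_single:
  "p = (\<Sum>u\<in>Poly_Mapping.keys p. Poly_Mapping.single u (Poly_Mapping.lookup p u))"
  by (rule poly_mapping_eqI) (auto simp: lookup_sum lookup_single when_def in_keys_iff)

lemma fmul_eq_times: "fmul p q = p * q"
proof -
  have "p * q = (\<Sum>u\<in>Poly_Mapping.keys p. Poly_Mapping.single u (Poly_Mapping.lookup p u)) *
      (\<Sum>v\<in>Poly_Mapping.keys q. Poly_Mapping.single v (Poly_Mapping.lookup q v))"
    using poly_mapping_sum_single[of p] poly_mapping_sum_single[of q] by simp
  also have "\<dots> = fmul p q"
    by (simp add: fmul_def sum_distrib_left sum_distrib_right mult_single plus_list_def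
        sum.swap[of _ "Poly_Mapping.keys q"])
  finally show ?thesis by simp
qed

lemma fscal_eq_single_zero: "fscal c = Poly_Mapping.single 0 c"
  by (simp add: fscal_def flip: zero_list_def)

lemma fone_eq_one: "fone = 1"
  by (simp add: fone_def fscal_eq_single_zero)

lemma fpow_eq_power: "fpow p n = p ^ n"
  by (induct n) (simp_all add: fpow_def fone_eq_one fmul_eq_times)

lemma fscal_commute: "p * fscal c = fscal c * p"
proof -
  have "fscal c * p = fscal c *
      (\<Sum>u\<in>Poly_Mapping.keys p. Poly_Mapping.single u (Poly_Mapping.lookup p u))"
    using poly_mapping_sum_single[of p] by simp
  also have "\<dots> = (\<Sum>u\<in>Poly_Mapping.keys p. Poly_Mapping.single u (Poly_Mapping.lookup p u)) * fscal c"
    by (simp add: fscal_eq_single_zero sum_distrib_left sum_distrib_right mult_single mult.commute)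
  finally show ?thesis using poly_mapping_sum_single[of p] by simp
qed

lemma fscal_left_commute: "p * (fscal c * q) = fscal c * (p * q)"
  by (metis fscal_commute mult.assoc)

lemma fscal_numeral [simp]: "fscal (numeral n) = numeral n"
  by (simp add: fscal_eq_single_zero)

lemma fscal_one [simp]: "fscal 1 = 1"
  by (simp add: fscal_eq_single_zero)

lemma fscal_zero [simp]: "fscal 0 = 0"
  by (simp add: fscal_eq_single_zero)

lemma fscal_minus: "fscal (- c) = - fscal c"
  by (simp add: fscal_eq_single_zero single_uminus)

lemma fscal_add: "fscal (c + c') = fscal c + fscal c'"
  by (simp add: fscal_eq_single_zero single_add)

lemma fscal_mult: "fscal (c * c') = fscal c * fscal c'"
  by (simp add: fscal_eq_single_zero mult_single)

lemma fscal_half_double: "fscal (1/2) * (p + p) = p"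
proof -
  have "fscal (1/2) * (p + p) = fscal (1/2) * fscal 2 * p"
    by (simp add: mult.assoc mult_2 distrib_left)
  also have "\<dots> = fscal (1/2 * 2) * p" by (simp only: fscal_mult fscal_numeral)
  also have "\<dots> = p" by simp
  finally show ?thesis .
qed

lemma gx_eq: "gx = fscal (1/2) * (Aop + Astar)"
  using fscal_half_double[of gx] by (simp add: Aop_def Astar_def algebra_simps)

lemma gy_eq: "gy = fscal (1/2) * (Aop - Astar)"
  using fscal_half_double[of gy] by (simp add: Aop_def Astar_def algebra_simps)

lemma basis_elem_eq: "basis_elem (a, d, b) = Astar ^ a * (if d then gs else 1) * Aop ^ b"
  by (simp add: basis_elem_def fmul_eq_times fpow_eq_power fone_eq_one)

section \<open>Left multiplication on coefficient families\<close>

text \<open>A coefficient family f stands for \<Sum> f a \<delta> b (A*)^a s^\<delta> A^b. The operators below describe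
  left multiplication by A*, s and A on such sums; the one for A comes from
  A (A*)^a s^\<delta> A^b = (-1)^\<delta> (A*)^a s^\<delta> A^(b+1) + a (A*)^(a-1) s^\<delta> A^b
     + 2k [a odd] (A*)^(a-1) s^(1-\<delta>) A^b.\<close>

type_synonym coeffs = "nat \<Rightarrow> bool \<Rightarrow> nat \<Rightarrow> complex"

definition pbw_unit :: "nat \<Rightarrow> bool \<Rightarrow> nat \<Rightarrow> coeffs" where
  "pbw_unit a0 d0 b0 = (\<lambda>a d b. if a = a0 \<and> d = d0 \<and> b = b0 then 1 else 0)"

definition act_Astar :: "coeffs \<Rightarrow> coeffs" where
  "act_Astar f = (\<lambda>a d b. if a = 0 then 0 else f (a - 1) d b)"

definition act_s :: "coeffs \<Rightarrow> coeffs" where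
  "act_s f = (\<lambda>a d b. (-1) ^ a * f a (\<not> d) b)"

definition act_A :: "complex \<Rightarrow> coeffs \<Rightarrow> coeffs" where
  "act_A k f = (\<lambda>a d b. (if b = 0 then 0 else (if d then -1 else 1) * f a d (b - 1))
     + of_nat (Suc a) * f (Suc a) d b + (if even a then 2 * k * f (Suc a) (\<not> d) b else 0))"

definition act_gen :: "complex \<Rightarrow> gen \<Rightarrow> coeffs \<Rightarrow> coeffs" where
  "act_gen k g f = (case g of
      GX \<Rightarrow> (\<lambda>a d b. (act_A k f a d b + act_Astar f a d b) / 2)
    | GY \<Rightarrow> (\<lambda>a d b. (act_A k f a d b - act_Astar f a d b) / 2)
    | GS \<Rightarrow> act_s f)"

primrec act_word :: "complex \<Rightarrow> gen list \<Rightarrow> coeffs \<Rightarrow> coeffs" where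
  "act_word k [] f = f"
| "act_word k (g # w) f = act_gen k g (act_word k w f)"

definition act :: "complex \<Rightarrow> fa \<Rightarrow> coeffs \<Rightarrow> coeffs" where
  "act k p f = (\<lambda>a d b. \<Sum>w\<in>Poly_Mapping.keys p. Poly_Mapping.lookup p w * act_word k w f a d b)"

definition linear_op :: "(coeffs \<Rightarrow> coeffs) \<Rightarrow> bool" where
  "linear_op T \<longleftrightarrow>
     (\<forall>f g c. T (\<lambda>a d b. c * f a d b + g a d b) = (\<lambda>a d b. c * T f a d b + T g a d b))"

lemma linear_op_zero: "linear_op T \<Longrightarrow> T (\<lambda>a d b. 0) = (\<lambda>a d b. 0)"
  unfolding linear_op_def
  by (drule spec[of _ "\<lambda>a d b. 0"], drule spec[of _ "\<lambda>a d b. 0"]) (auto dest: spec[of _ "-1"])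

lemma linear_op_sum:
  assumes "linear_op T" "finite I"
  shows "T (\<lambda>a d b. \<Sum>i\<in>I. c i * f i a d b) = (\<lambda>a d b. \<Sum>i\<in>I. c i * T (f i) a d b)"
  using assms(2)
proof (induct I rule: finite_induct)
  case empty
  then show ?case using linear_op_zero[OF assms(1)] by simp
next
  case (insert i I)
  then show ?case
    using assms(1)[unfolded linear_op_def,
        rule_format, of "c i" "f i" "\<lambda>a d b. \<Sum>i\<in>I. c i * f i a d b"]
    by simp
qed

lemma linear_op_act_gen: "linear_op (act_gen k g)"
  unfolding linear_op_def act_gen_def act_A_def act_Astar_def act_s_def
  by (cases g) (auto simp: fun_eq_iff algebra_simps add_divide_distrib diff_divide_distrib)

lemma linear_op_act_word: "linear_op (act_word k w)"
proof (induct w)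
  case (Cons g w)
  then show ?case using linear_op_act_gen[of k g] unfolding linear_op_def by simp
qed (simp add: linear_op_def)

lemma act_word_append: "act_word k (u @ v) f = act_word k u (act_word k v f)"
  by (induct u) auto

lemma act_eq_sum_superset:
  "finite W \<Longrightarrow> Poly_Mapping.keys p \<subseteq> W \<Longrightarrow>
     act k p f = (\<lambda>a d b. \<Sum>w\<in>W. Poly_Mapping.lookup p w * act_word k w f a d b)"
  unfolding act_def by (intro ext sum.mono_neutral_left) (auto simp: in_keys_iff)

lemma act_add: "act k (p + q) f = (\<lambda>a d b. act k p f a d b + act k q f a d b)"
proof -
  let ?W = "Poly_Mapping.keys p \<union> Poly_Mapping.keys q"
  have "finite ?W" by simp
  then show ?thesis
    using act_eq_sum_superset[of ?W p] act_eq_sum_superset[of ?W q]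
      act_eq_sum_superset[of ?W "p + q"] keys_add[of p q]
    by (simp add: lookup_add algebra_simps sum.distrib)
qed

lemma act_zero: "act k 0 f = (\<lambda>a d b. 0)"
  by (simp add: act_def)

lemma act_uminus: "act k (- p) f = (\<lambda>a d b. - act k p f a d b)"
  by (simp add: act_def sum_negf)

lemma act_diff: "act k (p - q) f = (\<lambda>a d b. act k p f a d b - act k q f a d b)"
  using act_add[of k p "- q" f] act_uminus[of k q f] by simp

lemma act_sum: "finite I \<Longrightarrow> act k (\<Sum>i\<in>I. p i) f = (\<lambda>a d b. \<Sum>i\<in>I. act k (p i) f a d b)"
  by (induct I rule: finite_induct) (simp_all add: act_zero act_add)

lemma act_single: "act k (Poly_Mapping.single w c) f = (\<lambda>a d b. c * act_word k w f a d b)"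
  by (cases "c = 0") (simp_all add: act_def)

lemma act_mult: "act k (p * q) f = act k p (act k q f)"
proof -
  have "act k (p * q) f = (\<lambda>a d b. \<Sum>u\<in>Poly_Mapping.keys p. \<Sum>v\<in>Poly_Mapping.keys q.
      Poly_Mapping.lookup p u * (Poly_Mapping.lookup q v * act_word k u (act_word k v f) a d b))"
    unfolding fmul_eq_times[symmetric] fmul_def
    by (simp add: act_sum act_single act_word_append algebra_simps)
  also have "\<dots> = act k p (act k q f)"
    by (simp add: act_def[of k p] act_def[of k q] linear_op_sum[OF linear_op_act_word]
        sum_distrib_left)
  finally show ?thesis .
qed

lemma act_fscal: "act k (fscal c) f = (\<lambda>a d b. c * f a d b)"
  by (simp add: fscal_def act_single)

lemma act_one: "act k 1 f = f"
  using act_fscal[of k 1 f] by simp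

lemma act_power: "act k (p ^ n) f = (act k p ^^ n) f"
  by (induct n arbitrary: f) (simp_all add: act_one act_mult)

lemma act_gx: "act k gx = act_gen k GX"
  and act_gy: "act k gy = act_gen k GY"
  and act_gs: "act k gs = act_s"
  by (simp_all add: gx_def gy_def gs_def act_single fun_eq_iff act_gen_def)

lemma act_Aop: "act k Aop = act_A k"
  by (simp add: Aop_def fun_eq_iff act_add act_gx act_gy act_gen_def add_divide_distrib[symmetric])

lemma act_Astar_eq: "act k Astar = act_Astar"
  by (simp add: Astar_def fun_eq_iff act_diff act_gx act_gy act_gen_def diff_divide_distrib[symmetric])

lemma act_relator:
  assumes "r \<in> relators k"
  shows "act k r f = (\<lambda>a d b. 0)"
proof -
  have "act_gen k GY (act_gen k GX f) a d b - act_gen k GX (act_gen k GY f) a d b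
          - f a d b / 2 - k * act_s f a d b = 0"
    and "act_s (act_s f) a d b - f a d b = 0"
    and "act_s (act_gen k GX (act_s f)) a d b + act_gen k GX f a d b = 0"
    and "act_s (act_gen k GY (act_s f)) a d b + act_gen k GY f a d b = 0" for a d b
    unfolding act_gen_def act_A_def act_Astar_def act_s_def
    by (cases a; cases b; cases d; simp add: field_simps)+
  then show ?thesis
    using assms unfolding relators_def
    by (auto simp: fmul_eq_times fone_eq_one act_add act_diff act_mult act_one act_fscal
        act_gx act_gy act_gs fun_eq_iff)
qed

lemma act_zero_coeffs: "act k p (\<lambda>a d b. 0) = (\<lambda>a d b. 0)"
  by (simp add: act_def linear_op_zero[OF linear_op_act_word])

lemma act_dahaIdeal: "r \<in> dahaIdeal k \<Longrightarrow> act k r f = (\<lambda>a d b. 0)"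
proof (induct r arbitrary: f rule: dahaIdeal.induct)
  case (rel r)
  then show ?case by (rule act_relator)
qed (simp_all add: act_zero act_add fmul_eq_times act_mult act_zero_coeffs)

lemma act_vanishing_at_b0:
  assumes "\<forall>a d. f a d 0 = 0"
  shows "act k p f a d 0 = 0"
proof -
  have "\<forall>a d. act_word k w f a d 0 = 0" for w
    using assms
    by (induct w) (auto simp: act_gen_def act_A_def act_Astar_def act_s_def split: gen.splits)
  then show ?thesis by (simp add: act_def)
qed

lemma act_A_pbw_unit_power: "(act_A k ^^ n) (pbw_unit 0 False b) = pbw_unit 0 False (n + b)"
  by (induct n) (auto simp: act_A_def pbw_unit_def fun_eq_iff)

lemma act_Astar_pbw_unit_power: "(act_Astar ^^ n) (pbw_unit a d b) = pbw_unit (n + a) d b"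
  by (induct n) (auto simp: act_Astar_def pbw_unit_def fun_eq_iff)

lemma act_s_pbw_unit: "act_s (pbw_unit 0 d b) = pbw_unit 0 (\<not> d) b"
  by (auto simp: act_s_def pbw_unit_def fun_eq_iff)

lemma act_basis_elem: "act k (basis_elem (a, d, b)) (pbw_unit 0 False 0) = pbw_unit a d b"
  by (simp add: basis_elem_eq act_mult act_power act_Aop act_Astar_eq act_gs act_one
      act_A_pbw_unit_power act_s_pbw_unit act_Astar_pbw_unit_power)

lemma act_basis_sum:
  "act k (basis_sum c) (pbw_unit 0 False 0) = (\<lambda>a d b. Poly_Mapping.lookup c (a, d, b))"
proof (intro ext)
  fix a d b
  have "act k (basis_sum c) (pbw_unit 0 False 0) a d b
      = (\<Sum>t\<in>Poly_Mapping.keys c.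
           Poly_Mapping.lookup c t * act k (basis_elem t) (pbw_unit 0 False 0) a d b)"
    unfolding basis_sum_def by (simp add: act_sum fmul_eq_times act_mult act_fscal)
  also have "\<dots> = (\<Sum>t\<in>Poly_Mapping.keys c. if t = (a, d, b) then Poly_Mapping.lookup c t else 0)"
    by (intro sum.cong refl, simp only: split_paired_all act_basis_elem) (auto simp: pbw_unit_def)
  also have "\<dots> = Poly_Mapping.lookup c (a, d, b)"
    by (auto simp: in_keys_iff)
  finally show "act k (basis_sum c) (pbw_unit 0 False 0) a d b = Poly_Mapping.lookup c (a, d, b)" .
qed

lemma dahaRep_coeffs:
  "dahaRep k h c \<Longrightarrow> act k h (pbw_unit 0 False 0) = (\<lambda>a d b. Poly_Mapping.lookup c (a, d, b))"
  unfolding dahaRep_def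
  using act_dahaIdeal[of "h - basis_sum c" k "pbw_unit 0 False 0"] act_basis_sum[of k c]
  by (simp add: act_diff fun_eq_iff)

lemma dahaRep_unique: "dahaRep k h c \<Longrightarrow> dahaRep k h c' \<Longrightarrow> c = c'"
  by (rule poly_mapping_eqI) (metis dahaRep_coeffs prod_cases3)

section \<open>The monomials span H''\<close>

lemma dahaIdeal_mult_left: "p \<in> dahaIdeal k \<Longrightarrow> u * p \<in> dahaIdeal k"
  using dahaIdeal.lmul[of p k u] by (simp add: fmul_eq_times)

lemma dahaIdeal_mult_right: "p \<in> dahaIdeal k \<Longrightarrow> p * u \<in> dahaIdeal k"
  using dahaIdeal.rmul[of p k u] by (simp add: fmul_eq_times)

lemma dahaIdeal_diff: "p \<in> dahaIdeal k \<Longrightarrow> q \<in> dahaIdeal k \<Longrightarrow> p - q \<in> dahaIdeal k"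
  using dahaIdeal.add[of p k "(-1) * q"] dahaIdeal_mult_left[of q k "-1"] by simp

lemma basis_sum_superset:
  "finite T \<Longrightarrow> Poly_Mapping.keys c \<subseteq> T \<Longrightarrow>
     basis_sum c = (\<Sum>t\<in>T. fscal (Poly_Mapping.lookup c t) * basis_elem t)"
  unfolding basis_sum_def fmul_eq_times
  by (rule sum.mono_neutral_left) (auto simp: in_keys_iff)

context
  fixes k :: complex
begin

definition daha_cong :: "fa \<Rightarrow> fa \<Rightarrow> bool" (infix "\<approx>" 50) where
  "p \<approx> q \<longleftrightarrow> p - q \<in> dahaIdeal k"

lemma daha_cong_refl [simp]: "p \<approx> p"
  by (simp add: daha_cong_def dahaIdeal.zero)

lemma daha_cong_sym: "p \<approx> q \<Longrightarrow> q \<approx> p"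
  unfolding daha_cong_def using dahaIdeal_mult_left[of "p - q" k "-1"] by simp

lemma daha_cong_trans [trans]: "p \<approx> q \<Longrightarrow> q \<approx> r \<Longrightarrow> p \<approx> r"
  unfolding daha_cong_def using dahaIdeal.add by fastforce

lemma daha_cong_mult: "p \<approx> q \<Longrightarrow> u * p * v \<approx> u * q * v"
  unfolding daha_cong_def using dahaIdeal_mult_left dahaIdeal_mult_right
  by (metis left_diff_distrib right_diff_distrib)

lemma daha_cong_mult_left: "p \<approx> q \<Longrightarrow> u * p \<approx> u * q"
  using daha_cong_mult[of p q u 1] by simp

lemma daha_cong_mult_right: "p \<approx> q \<Longrightarrow> p * v \<approx> q * v"
  using daha_cong_mult[of p q 1 v] by simp

lemma daha_cong_act: "p \<approx> q \<Longrightarrow> act k p = act k q"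
  unfolding daha_cong_def using act_dahaIdeal[of "p - q" k] by (auto simp: act_diff fun_eq_iff)

lemma s_square: "gs * gs \<approx> 1"
  using dahaIdeal.rel[of _ k] by (simp add: daha_cong_def relators_def fmul_eq_times fone_eq_one)

lemma s_anticommutes: 
  assumes "g \<in> {gx, gy}"
  shows "gs * g + g * gs \<in> dahaIdeal k"
proof -
  have rel: "gs * g * gs + g \<in> dahaIdeal k"
    using assms dahaIdeal.rel[of _ k] by (auto simp: relators_def fmul_eq_times)
  have "gs * g + g * gs = (gs * g * gs + g) * gs - gs * g * (gs * gs - 1)"
    by (simp add: algebra_simps)
  then show ?thesis
    using dahaIdeal_diff[OF dahaIdeal_mult_right[OF rel] dahaIdeal_mult_left[OF s_square[unfolded daha_cong_def]]]
    by simp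
qed

lemma s_Astar_anticomm: "gs * Astar \<approx> - (Astar * gs)"
proof -
  have "gs * Astar - - (Astar * gs) = (gs * gx + gx * gs) - (gs * gy + gy * gs)"
    by (simp add: Astar_def algebra_simps)
  then show ?thesis
    using dahaIdeal_diff[OF s_anticommutes s_anticommutes] by (simp add: daha_cong_def)
qed

lemma A_s_anticomm: "Aop * gs \<approx> - (gs * Aop)"
proof -
  have "Aop * gs - - (gs * Aop) = (gs * gx + gx * gs) + (gs * gy + gy * gs)"
    by (simp add: Aop_def algebra_simps)
  then show ?thesis
    using dahaIdeal.add[OF s_anticommutes s_anticommutes] by (simp add: daha_cong_def)
qed

lemma s_x_anticomm: "gs * gx \<approx> - (gx * gs)"
  using s_anticommutes[of gx] by (simp add: daha_cong_def)

lemma y_x_relation: "gy * gx - gx * gy - fscal (1/2) - fscal k * gs \<in> dahaIdeal k"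
  by (rule dahaIdeal.rel) (simp add: relators_def fmul_eq_times)

lemma x_Astar_comm: "gx * Astar \<approx> Astar * gx + fscal (1/2) + fscal k * gs"
proof -
  have "gx * Astar - (Astar * gx + fscal (1/2) + fscal k * gs)
      = gy * gx - gx * gy - fscal (1/2) - fscal k * gs"
    by (simp add: Astar_def algebra_simps)
  then show ?thesis
    unfolding daha_cong_def by (simp only: y_x_relation)
qed

lemma A_Astar_comm: "Aop * Astar \<approx> Astar * Aop + 1 + fscal (2 * k) * gs"
proof -
  have "Aop * Astar - (Astar * Aop + 1 + fscal (2 * k) * gs)
      = 2 * (gy * gx - gx * gy - fscal (1/2) - fscal k * gs)"
  proof -
    have "fscal (2 * k) = fscal k + fscal k" "fscal (1/2) + fscal (1/2) = 1"
      by (simp_all flip: fscal_add)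
    then show ?thesis by (simp add: Aop_def Astar_def algebra_simps mult_2)
  qed
  then show ?thesis
    unfolding daha_cong_def by (simp only: dahaIdeal_mult_left[OF y_x_relation])
qed

lemma anticomm_power:
  assumes "h * g \<approx> - (g * h)"
  shows "h * g ^ n \<approx> fscal ((-1) ^ n) * g ^ n * h"
proof (induct n)
  case (Suc n)
  have "h * g ^ Suc n = (h * g) * g ^ n"
    by (simp add: mult.assoc)
  also have "\<dots> \<approx> - (g * h) * g ^ n"
    by (rule daha_cong_mult_right[OF assms])
  also have "\<dots> = (- g) * (h * g ^ n)"
    by (simp add: mult.assoc)
  also have "\<dots> \<approx> (- g) * (fscal ((-1) ^ n) * g ^ n * h)"
    by (rule daha_cong_mult_left[OF Suc])
  also have "\<dots> = fscal ((-1) ^ Suc n) * g ^ Suc n * h"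
    by (simp add: fscal_minus fscal_left_commute mult.assoc)
  finally show ?case .
qed simp

definition pbw_span :: "fa set" where
  "pbw_span = {h. \<exists>c. dahaRep k h c}"

lemma pbw_span_cong: "h \<approx> h' \<Longrightarrow> h' \<in> pbw_span \<Longrightarrow> h \<in> pbw_span"
  unfolding pbw_span_def dahaRep_def daha_cong_def using dahaIdeal.add by fastforce

lemma basis_elem_in_pbw_span: "basis_elem t \<in> pbw_span"
  unfolding pbw_span_def dahaRep_def mem_Collect_eq
  by (rule exI[of _ "Poly_Mapping.single t 1"]) (simp add: basis_sum_def fmul_eq_times dahaIdeal.zero)

lemma pbw_span_zero: "0 \<in> pbw_span"
  unfolding pbw_span_def dahaRep_def mem_Collect_eq
  by (rule exI[of _ 0]) (simp add: basis_sum_def dahaIdeal.zero)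

lemma pbw_span_add: "h \<in> pbw_span \<Longrightarrow> h' \<in> pbw_span \<Longrightarrow> h + h' \<in> pbw_span"
proof -
  assume "h \<in> pbw_span" "h' \<in> pbw_span"
  then obtain c c' where "h - basis_sum c \<in> dahaIdeal k" "h' - basis_sum c' \<in> dahaIdeal k"
    by (auto simp: pbw_span_def dahaRep_def)
  moreover
  let ?T = "Poly_Mapping.keys c \<union> Poly_Mapping.keys c'"
  have "basis_sum (c + c') = basis_sum c + basis_sum c'"
    using basis_sum_superset[of ?T c] basis_sum_superset[of ?T c']
      basis_sum_superset[of ?T "c + c'"] keys_add[of c c']
    by (simp add: lookup_add fscal_add distrib_right sum.distrib)
  ultimately have "h + h' - basis_sum (c + c') \<in> dahaIdeal k"
    using dahaIdeal.add by (fastforce simp: algebra_simps)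
  then show ?thesis by (auto simp: pbw_span_def dahaRep_def)
qed

lemma pbw_span_scal: "h \<in> pbw_span \<Longrightarrow> fscal x * h \<in> pbw_span"
proof -
  assume "h \<in> pbw_span"
  then obtain c where c: "h - basis_sum c \<in> dahaIdeal k"
    by (auto simp: pbw_span_def dahaRep_def)
  let ?c = "Poly_Mapping.map ((*) x) c"
  have lookup_c: "Poly_Mapping.lookup ?c t = x * Poly_Mapping.lookup c t" for t
    by (simp add: Poly_Mapping.map.rep_eq when_def)
  have "Poly_Mapping.keys ?c \<subseteq> Poly_Mapping.keys c"
    by (auto simp: in_keys_iff lookup_c)
  then have "basis_sum ?c = fscal x * basis_sum c"
    using basis_sum_superset[of "Poly_Mapping.keys c" ?c] basis_sum_superset[of "Poly_Mapping.keys c" c]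
    by (simp add: lookup_c fscal_mult sum_distrib_left mult.assoc)
  then have "fscal x * h - basis_sum ?c \<in> dahaIdeal k"
    using dahaIdeal_mult_left[OF c, of "fscal x"] by (simp add: algebra_simps)
  then show ?thesis by (auto simp: pbw_span_def dahaRep_def)
qed

lemma pbw_span_sum: "finite I \<Longrightarrow> (\<And>i. i \<in> I \<Longrightarrow> p i \<in> pbw_span) \<Longrightarrow> (\<Sum>i\<in>I. p i) \<in> pbw_span"
  by (induct I rule: finite_induct) (auto simp: pbw_span_zero pbw_span_add)

lemma pbw_span_mult_left:
  assumes "\<And>t. g * basis_elem t \<in> pbw_span" "h \<in> pbw_span"
  shows "g * h \<in> pbw_span"
proof -
  obtain c where c: "h - basis_sum c \<in> dahaIdeal k"
    using assms(2) by (auto simp: pbw_span_def dahaRep_def)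
  have "g * basis_sum c
      = (\<Sum>t\<in>Poly_Mapping.keys c. fscal (Poly_Mapping.lookup c t) * (g * basis_elem t))"
    unfolding basis_sum_def fmul_eq_times sum_distrib_left by (intro sum.cong refl fscal_left_commute)
  also have "\<dots> \<in> pbw_span"
    by (intro pbw_span_sum pbw_span_scal assms(1)) simp
  finally have "g * basis_sum c \<in> pbw_span" .
  moreover have "g * h \<approx> g * basis_sum c"
    using c by (intro daha_cong_mult_left) (simp add: daha_cong_def)
  ultimately show ?thesis by (rule pbw_span_cong[rotated])
qed

lemma Astar_mult_pbw_span: "h \<in> pbw_span \<Longrightarrow> Astar * h \<in> pbw_span"
proof (rule pbw_span_mult_left)
  show "Astar * basis_elem t \<in> pbw_span" for t
    using basis_elem_in_pbw_span[of "(Suc (fst t), snd t)"]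
    by (cases t) (simp add: basis_elem_eq mult.assoc)
qed

lemma s_mult_pbw_span: "h \<in> pbw_span \<Longrightarrow> gs * h \<in> pbw_span"
proof (rule pbw_span_mult_left)
  fix t :: "nat \<times> bool \<times> nat"
  obtain a d b where t: "t = (a, d, b)" by (cases t)
  have "gs * basis_elem t = (gs * Astar ^ a) * ((if d then gs else 1) * Aop ^ b)"
    by (simp add: t basis_elem_eq mult.assoc)
  also have "\<dots> \<approx> (fscal ((-1) ^ a) * Astar ^ a * gs) * ((if d then gs else 1) * Aop ^ b)"
    by (rule daha_cong_mult_right[OF anticomm_power[OF s_Astar_anticomm]])
  also have "\<dots> = fscal ((-1) ^ a) * Astar ^ a * (gs * (if d then gs else 1)) * Aop ^ b"
    by (simp add: mult.assoc)
  also have "\<dots> \<approx> fscal ((-1) ^ a) * Astar ^ a * (if d then 1 else gs) * Aop ^ b"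
    by (rule daha_cong_mult) (simp add: s_square)
  also have "\<dots> = fscal ((-1) ^ a) * basis_elem (a, \<not> d, b)"
    by (simp add: basis_elem_eq mult.assoc)
  finally show "gs * basis_elem t \<in> pbw_span"
    by (rule pbw_span_cong) (intro pbw_span_scal basis_elem_in_pbw_span)
qed

lemma A_mult_basis_elem_in_pbw_span: "Aop * basis_elem (a, d, b) \<in> pbw_span"
proof (induct a arbitrary: d b)
  case 0
  show ?case
  proof (cases d)
    case False
    then show ?thesis
      using basis_elem_in_pbw_span[of "(0, False, Suc b)"] by (simp add: basis_elem_eq)
  next
    case True
    then have "Aop * basis_elem (0, d, b) = (Aop * gs) * Aop ^ b"
      by (simp add: basis_elem_eq mult.assoc)
    also have "\<dots> \<approx> - (gs * Aop) * Aop ^ b"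
      by (rule daha_cong_mult_right[OF A_s_anticomm])
    also have "\<dots> = fscal (-1) * basis_elem (0, True, Suc b)"
      by (simp add: basis_elem_eq fscal_minus mult.assoc)
    finally show ?thesis
      by (rule pbw_span_cong) (intro pbw_span_scal basis_elem_in_pbw_span)
  qed
next
  case (Suc a)
  let ?e = "basis_elem (a, d, b)"
  have "Aop * basis_elem (Suc a, d, b) = (Aop * Astar) * ?e"
    by (simp add: basis_elem_eq mult.assoc)
  also have "\<dots> \<approx> (Astar * Aop + 1 + fscal (2 * k) * gs) * ?e"
    by (rule daha_cong_mult_right[OF A_Astar_comm])
  also have "\<dots> = Astar * (Aop * ?e) + ?e + fscal (2 * k) * (gs * ?e)"
    by (simp add: algebra_simps)
  finally show ?case
    by (rule pbw_span_cong)
      (intro pbw_span_add Astar_mult_pbw_span pbw_span_scal s_mult_pbw_span Suc basis_elem_in_pbw_span)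
qed

lemma A_mult_pbw_span: "h \<in> pbw_span \<Longrightarrow> Aop * h \<in> pbw_span"
  by (rule pbw_span_mult_left) (auto simp: split_paired_all A_mult_basis_elem_in_pbw_span)

lemma word_in_pbw_span: "Poly_Mapping.single w 1 \<in> pbw_span"
proof (induct w)
  case Nil
  then show ?case
    using basis_elem_in_pbw_span[of "(0, False, 0)"] by (simp add: basis_elem_eq flip: zero_list_def)
next
  case (Cons g w)
  have "Poly_Mapping.single (g # w) 1 = Poly_Mapping.single [g] 1 * Poly_Mapping.single w (1::complex)"
    by (simp add: mult_single plus_list_def)
  moreover have "gx * h \<in> pbw_span" "gy * h \<in> pbw_span" if "h \<in> pbw_span" for h
  proof -
    have "gx * h = fscal (1/2) * (Aop * h + Astar * h)"
      and "gy * h = fscal (1/2) * (Aop * h + fscal (-1) * (Astar * h))"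
      by (simp_all add: gx_eq gy_eq fscal_minus algebra_simps)
    then show "gx * h \<in> pbw_span" "gy * h \<in> pbw_span"
      using that by (simp_all add: pbw_span_scal pbw_span_add A_mult_pbw_span Astar_mult_pbw_span)
  qed
  ultimately show ?case
    using Cons s_mult_pbw_span by (cases g) (simp_all flip: gx_def gy_def gs_def)
qed

lemma pbw_span_UNIV: "h \<in> pbw_span"
proof -
  have "h = (\<Sum>u\<in>Poly_Mapping.keys h. fscal (Poly_Mapping.lookup h u) * Poly_Mapping.single u 1)"
    by (subst poly_mapping_sum_single) (simp add: fscal_eq_single_zero mult_single)
  also have "\<dots> \<in> pbw_span"
    by (intro pbw_span_sum pbw_span_scal word_in_pbw_span) simp
  finally show ?thesis .
qed

lemma dahaRep_exists: "\<exists>c. dahaRep k h c"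
  using pbw_span_UNIV[of h] by (simp add: pbw_span_def)

section \<open>The coinvariant of powers of x\<close>

lemma coinv_eq_act:
  "coinv k h = act k h (pbw_unit 0 False 0) 0 False 0 + act k h (pbw_unit 0 False 0) 0 True 0"
proof -
  obtain c where c: "dahaRep k h c"
    using dahaRep_exists by blast
  then have "(THE c. dahaRep k h c) = c"
    using dahaRep_unique by blast
  then show ?thesis
    using dahaRep_coeffs[OF c] by (simp add: coinv_def)
qed

lemma coinv_cong: "p \<approx> q \<Longrightarrow> coinv k p = coinv k q"
  by (simp add: coinv_eq_act daha_cong_act)

lemma coinv_add: "coinv k (p + q) = coinv k p + coinv k q"
  by (simp add: coinv_eq_act act_add)

lemma coinv_scal: "coinv k (fscal c * p) = c * coinv k p"
  by (simp add: coinv_eq_act act_mult act_fscal algebra_simps)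

lemma coinv_one: "coinv k 1 = 1"
  by (simp add: coinv_eq_act act_one pbw_unit_def)

lemma coinv_Astar_mult: "coinv k (Astar * h) = 0"
  by (simp add: coinv_eq_act act_mult act_Astar_eq act_Astar_def)

lemma coinv_s_mult: "coinv k (gs * h) = coinv k h"
  by (simp add: coinv_eq_act act_mult act_gs act_s_def)

lemma coinv_mult_A: "coinv k (h * Aop) = 0"
proof -
  have "\<forall>a d. act_A k (pbw_unit 0 False 0) a d 0 = 0"
    by (simp add: act_A_def pbw_unit_def)
  then show ?thesis
    by (simp add: coinv_eq_act act_mult act_Aop act_vanishing_at_b0)
qed

lemma coinv_x_power_s: "coinv k (gx ^ m * gs * gx ^ j) = (-1) ^ m * coinv k (gx ^ (m + j))"
proof -
  let ?c = "fscal ((-1) ^ m)"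
  have "?c * ?c = 1"
    by (simp flip: fscal_mult power_mult_distrib)
  then have "gx ^ m * gs * gx ^ j = ?c * (?c * gx ^ m * gs) * gx ^ j"
    by (simp add: mult.assoc[symmetric])
  also have "\<dots> \<approx> ?c * (gs * gx ^ m) * gx ^ j"
    by (rule daha_cong_mult[OF daha_cong_sym[OF anticomm_power[OF s_x_anticomm]]])
  also have "\<dots> = ?c * (gs * gx ^ (m + j))"
    by (simp add: mult.assoc power_add)
  finally show ?thesis
    by (simp add: coinv_cong coinv_scal coinv_s_mult)
qed

lemma coinv_x_power_Astar:
  "coinv k (gx ^ m * Astar * gx ^ j)
     = (of_nat m + (if odd m then 2 * k else 0)) / 2 * coinv k (gx ^ (m + j - 1))"
proof (induct m arbitrary: j)
  case 0
  then show ?case by (simp add: coinv_Astar_mult)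
next
  case (Suc m)
  have "gx ^ Suc m * Astar * gx ^ j = gx ^ m * (gx * Astar) * gx ^ j"
    by (simp only: power_Suc2 mult.assoc)
  also have "\<dots> \<approx> gx ^ m * (Astar * gx + fscal (1/2) + fscal k * gs) * gx ^ j"
    by (rule daha_cong_mult[OF x_Astar_comm])
  also have "\<dots> = gx ^ m * Astar * gx ^ Suc j + fscal (1/2) * gx ^ (m + j)
      + fscal k * (gx ^ m * gs * gx ^ j)"
    by (simp add: distrib_left distrib_right mult.assoc fscal_left_commute power_add)
  finally have "coinv k (gx ^ Suc m * Astar * gx ^ j)
      = (of_nat m + (if odd m then 2 * k else 0)) / 2 * coinv k (gx ^ (m + j))
        + 1/2 * coinv k (gx ^ (m + j)) + k * ((-1) ^ m * coinv k (gx ^ (m + j)))"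
    using Suc[of "Suc j"] by (simp add: coinv_cong coinv_add coinv_scal coinv_x_power_s)
  then show ?case
    by (cases "even m") (simp_all add: field_simps)
qed

lemma coinv_x_power_Suc_Suc:
  "coinv k (gx ^ Suc (Suc m)) = (of_nat (Suc m) + (if even m then 2 * k else 0)) / 4 * coinv k (gx ^ m)"
proof -
  have "gx ^ Suc (Suc m) = gx ^ Suc m * (fscal (1/2) * (Aop + Astar))"
    by (simp only: power_Suc2 flip: gx_eq)
  also have "\<dots> = fscal (1/2) * (gx ^ Suc m * Aop + gx ^ Suc m * Astar * gx ^ 0)"
    by (simp add: fscal_left_commute distrib_left)
  finally have "coinv k (gx ^ Suc (Suc m)) = 1/2 * coinv k (gx ^ Suc m * Astar * gx ^ 0)"
    by (simp only: coinv_add coinv_scal coinv_mult_A) simp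
  also have "\<dots> = (of_nat (Suc m) + (if even m then 2 * k else 0)) / 4 * coinv k (gx ^ m)"
    by (simp only: coinv_x_power_Astar) (simp add: field_simps)
  finally show ?thesis .
qed

lemma coinv_x_power_odd: "coinv k (gx ^ (2 * p + 1)) = 0"
proof (induct p)
  case 0
  have "coinv k gx = coinv k (fscal (1/2) * (1 * Aop + Astar * 1))"
    by (simp add: gx_eq)
  also have "\<dots> = 0"
    by (simp only: coinv_add coinv_scal coinv_mult_A coinv_Astar_mult) simp
  finally show ?case by simp
next
  case (Suc p)
  then show ?case
    using coinv_x_power_Suc_Suc[of "2 * p + 1"] by simp
qed

lemma coinv_x_power_even: "coinv k (gx ^ (2 * p)) = (\<Prod>i<p. (1/2 + k + of_nat i)) / 2 ^ p"
proof (induct p)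
  case 0
  then show ?case by (simp add: coinv_one)
next
  case (Suc p)
  have "coinv k (gx ^ (2 * Suc p)) = (of_nat (Suc (2 * p)) + 2 * k) / 4 * coinv k (gx ^ (2 * p))"
    using coinv_x_power_Suc_Suc[of "2 * p"] by simp
  also have "\<dots> = (1/2 + k + of_nat p) / 2 * ((\<Prod>i<p. (1/2 + k + of_nat i)) / 2 ^ p)"
    by (simp only: Suc) (simp add: field_simps)
  also have "\<dots> = (\<Prod>i<Suc p. (1/2 + k + of_nat i)) / 2 ^ Suc p"
    by (simp add: field_simps)
  finally show ?case .
qed

end

lemma bracket_xpow: "bracket k (xpow a) (xpow b) = coinv k (gx ^ (a + b))"
proof -
  have "gx ^ n = Poly_Mapping.single (replicate n GX) 1" for n
    by (induct n) (simp flip: zero_list_def, simp add: gx_def mult_single plus_list_def)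
  moreover have "count_list (replicate n GX) GY = 0" for n
    by (induct n) auto
  ultimately have "fstar (gx ^ n) = gx ^ n" for n
    by (simp add: fstar_def)
  then show ?thesis
    by (simp add: bracket_def xpow_def fpow_eq_power fmul_eq_times power_add)
qed

theorem mainTheorem12:
  fixes k :: complex
  shows "(\<forall>h. \<exists>!c. dahaRep k h c) \<and>
         (\<forall>a b. odd (a + b) \<longrightarrow> bracket k (xpow a) (xpow b) = 0) \<and>
         (\<forall>a b p. a + b = 2 * p \<longrightarrow>
             bracket k (xpow a) (xpow b) = (\<Prod>i<p. (1/2 + k + of_nat i)) / 2 ^ p)"
proof (intro conjI allI impI)
  show "\<exists>!c. dahaRep k h c" for h
    using dahaRep_exists dahaRep_unique by blast
  show "bracket k (xpow a) (xpow b) = 0" if "odd (a + b)" for a b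
  proof -
    obtain p where "a + b = 2 * p + 1"
      using \<open>odd (a + b)\<close> by (rule oddE)
    then show ?thesis
      unfolding bracket_xpow by (simp only: coinv_x_power_odd)
  qed
  show "bracket k (xpow a) (xpow b) = (\<Prod>i<p. (1/2 + k + of_nat i)) / 2 ^ p"
    if "a + b = 2 * p" for a b p
    using that by (simp add: bracket_xpow coinv_x_power_even)
qed

end
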